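(* The function $\zeta(0,s)$ is analytic on $\mathbb{C}$ except at $s=2,1$, and has a pole at $s=2$ with residue $1$ and a pole at $s=1$ with residue $2\zeta(0)$. The function $\zeta(-1,s+1)$ is analytic except at $s=2,1$, and has a pole at $s=2$ with residue $1/2$ and a pole at $s=1$ with residue $\zeta(0)$. For an integer $n\ge2$, the function $\zeta(-n,s+n)$ is analytic except at $s=2,1,0,-2,-4,\dots,-2\lfloor n/2\rfloor+2$, and has poles: at $s=2$ with residue $\frac{1}{n+1}$; at $s=1$ with residue $\zeta(0)=-\frac12$; and at $s=-2k$ with residue $\binom{2k-n}{2k+1}\zeta(-2k-1)$, for $k=0,1,\dots,\lfloor n/2\rfloor-1$.
   Context: $\zeta(\cdot)$ of one variable is the Riemann zeta function. For an integer $n\ge 0$, $\zeta(-n,s+n)$ denotes the Euler–Zagier double zeta function $\zeta(s_1,s_2)=\sum_{1\le n_1<n_2} n_1^{-s_1}n_2^{-s_2}$ evaluated at $(s_1,s_2)=(-n,s+n)$; i.e. it is the meromorphic continuation to all $s\in\mathbb{C}$ of the series $\sum_{m,j\ge1} m^{n}(m+j)^{-s-n}$, which converges absolutely for $\Re(s)>2$. For an integer $a$ and non-negative integer $b$, $\binom{a}{b}=a(a-1)\cdots(a-b+1)/b!$. *)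

theory Defs
  imports "HOL-Complex_Analysis.Complex_Analysis"
begin

text \<open>Riemann zeta function: the (unique, by the identity theorem) holomorphic function
  on the complex plane minus 1 that agrees with the Dirichlet series for Re s > 1.\<close>
definition riemann_zeta :: "complex \<Rightarrow> complex" where
  "riemann_zeta = (SOME f. f holomorphic_on (UNIV - {1}) \<and>
      (\<forall>s. 1 < Re s \<longrightarrow> f s = (\<Sum>k. 1 / (of_nat (Suc k)) powr s)))"

text \<open>The series defining zeta(-n, s+n): sum over m, j >= 1 of m^n (m+j)^(-s-n),
  absolutely convergent for Re s > 2.\<close>
definition dz_series :: "nat \<Rightarrow> complex \<Rightarrow> complex" where
  "dz_series n s = (\<Sum>\<^sub>\<infinity>(m, j) \<in> {1::nat..} \<times> {1::nat..}.
      (of_nat m) ^ n * (of_nat (m + j)) powr (- (s + of_nat n)))"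

end

theory Submission
  imports Defs
begin

text \<open>Expanding \<open>(n + 2) powr (1 - s)\<close> binomially around \<open>n + 1\<close> and summing over \<open>n\<close> expresses
  \<open>(s - 1) \<zeta>(s)\<close> through \<open>\<zeta>(s + 1), \<dots>, \<zeta>(s + M + 1)\<close> plus a series that is holomorphic
  for \<open>Re s > -1 - M\<close>; this continues \<open>(s - 1) \<zeta>(s)\<close> to an entire function. Its values at
  \<open>1 - k\<close> are the Bernoulli numbers \<open>B\<^sub>k\<close> (with \<open>B\<^sub>1 = 1/2\<close>), whose exponential generating
  function is \<open>x e\<^sup>x / (e\<^sup>x - 1)\<close>.

  By Faulhaber's formula the inner sum \<open>\<Sum>\<^sub>m\<^sub>\<le>\<^sub>p m\<^sup>n\<close> of the double series is a polynomial in
  \<open>p + 1\<close> with Bernoulli coefficients, so \<open>\<zeta>(-n, s + n)\<close> is a finite combination of the shifted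
  functions \<open>\<zeta>(s + k - 1)\<close>, \<open>k = 0, \<dots>, n\<close>, minus \<open>\<zeta>(s)\<close>. The term \<open>k\<close> has a simple pole
  at \<open>s = 2 - k\<close> with residue its coefficient. The odd \<open>B\<^sub>k\<close> with \<open>k > 1\<close> vanish and the even
  ones do not (a Riccati equation for the generating function forces their signs to alternate),
  which leaves the poles \<open>2, 1, 0, -2, \<dots>\<close>; finally \<open>\<zeta>(-2j - 1) = -B\<^sub>2\<^sub>j\<^sub>+\<^sub>2 / (2j + 2)\<close>
  turns the coefficients into the stated residues.\<close>

lemma holomorphic_on_suminf_dominated:
  fixes f :: "nat \<Rightarrow> complex \<Rightarrow> complex"
  assumes S: "open S" and hol: "\<And>n. f n holomorphic_on S"
    and dom: "\<And>x. x \<in> S \<Longrightarrow> \<exists>d>0. cball x d \<subseteq> S \<and> (\<exists>M. summable M \<and>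
                 (\<forall>\<^sub>F n in sequentially. \<forall>y\<in>cball x d. norm (f n y) \<le> M n))"
  shows "(\<lambda>s. \<Sum>n. f n s) holomorphic_on S"
proof (rule holomorphic_uniform_sequence[OF S, where f = "\<lambda>n s. \<Sum>i<n. f i s"])
  show "(\<lambda>s. \<Sum>i<n. f i s) holomorphic_on S" for n
    by (intro holomorphic_on_sum hol)
next
  fix x assume "x \<in> S"
  then obtain d M where "d > 0" "cball x d \<subseteq> S" "summable M"
    and "\<forall>\<^sub>F n in sequentially. \<forall>y\<in>cball x d. norm (f n y) \<le> M n"
    using dom by blast
  then show "\<exists>d>0. cball x d \<subseteq> S \<and>
      uniform_limit (cball x d) (\<lambda>n s. \<Sum>i<n. f i s) (\<lambda>s. \<Sum>n. f n s) sequentially"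
    using Weierstrass_m_test_ev by blast
qed

lemma norm_of_nat_powr: "norm ((of_nat n :: complex) powr s) = real n powr Re s"
  by (subst norm_powr_real_powr) auto

lemma Re_ge_of_mem_cball: "y \<in> cball x d \<Longrightarrow> Re x - d \<le> Re y"
  using abs_Re_le_cmod[of "x - y"] by (auto simp: dist_norm)

lemma summable_real_Suc_powr: "1 < \<sigma> \<Longrightarrow> summable (\<lambda>k. real (Suc k) powr (- \<sigma>))"
  using summable_Suc_iff[of "\<lambda>n. real n powr (- \<sigma>)"] by (simp add: summable_real_powr_iff)

lemma norm_gbinomial_le: "norm ((a :: complex) gchoose j) \<le> (1 + norm a) ^ j"
proof (induction j)
  case 0
  then show ?case by simp
next
  case (Suc j)
  have "of_nat (Suc j) * (a gchoose Suc j) = (a - of_nat j) * (a gchoose j)"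
    using gbinomial_mult_1[of a j] by (simp add: algebra_simps)
  then have "real (Suc j) * norm (a gchoose Suc j) = norm (a - of_nat j) * norm (a gchoose j)"
    by (metis norm_mult norm_of_nat)
  also have "\<dots> \<le> (norm a + real j) * (1 + norm a) ^ j"
    using norm_triangle_ineq4[of a "of_nat j"] Suc.IH by (intro mult_mono) auto
  also have "\<dots> \<le> real (Suc j) * (1 + norm a) * (1 + norm a) ^ j"
    by (intro mult_right_mono) (auto simp: algebra_simps)
  finally show ?case
    by (simp add: mult.assoc del: of_nat_Suc)
qed

lemma holomorphic_on_gbinomial [holomorphic_intros]:
  "f holomorphic_on S \<Longrightarrow> (\<lambda>s. f s gchoose j) holomorphic_on S"
  unfolding gbinomial_altdef_of_nat by (intro holomorphic_intros) auto

lemma is_pole_of_tendsto_mult: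
  fixes f :: "complex \<Rightarrow> complex"
  assumes lim: "((\<lambda>w. f w * (w - p)) \<longlongrightarrow> c) (at p)" and "c \<noteq> 0"
  shows "is_pole f p"
proof -
  have "filterlim (\<lambda>w. w - p) (at 0) (at p)"
    by (intro filterlim_atI tendsto_eq_intros) (auto simp: eventually_at_filter)
  then have "filterlim (\<lambda>w. inverse (w - p)) at_infinity (at p)"
    using filterlim_compose filterlim_inverse_at_infinity by blast
  then have "filterlim (\<lambda>w. f w * (w - p) * inverse (w - p)) at_infinity (at p)"
    using tendsto_mult_filterlim_at_infinity[OF lim \<open>c \<noteq> 0\<close>] by blast
  moreover have "\<forall>\<^sub>F w in at p. f w * (w - p) * inverse (w - p) = f w"
    by (simp add: eventually_at_filter)
  ultimately show ?thesis
    unfolding is_pole_def by (simp add: filterlim_cong[OF refl refl])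
qed

lemma residue_of_tendsto_mult:
  fixes f :: "complex \<Rightarrow> complex"
  assumes "f holomorphic_on (UNIV - P)" "finite P"
    and "((\<lambda>w. f w * (w - p)) \<longlongrightarrow> c) (at p)"
  shows "residue f p = c"
proof (rule residue_simple')
  show "open (UNIV - (P - {p}))"
    using \<open>finite P\<close> by (intro open_Diff finite_imp_closed) auto
  show "f holomorphic_on (UNIV - (P - {p}) - {p})"
    using assms(1) by (rule holomorphic_on_subset) auto
qed (use assms in auto)

section \<open>Analytic continuation of the zeta function\<close>

definition zeta_series :: "complex \<Rightarrow> complex" where
  "zeta_series s = (\<Sum>k. of_nat (Suc k) powr (- s))"

lemma sums_zeta_series: "1 < Re s \<Longrightarrow> (\<lambda>k. of_nat (Suc k) powr (- s)) sums zeta_series s"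
  unfolding zeta_series_def
  by (intro summable_sums, rule summable_norm_cancel)
     (simp add: norm_of_nat_powr summable_real_Suc_powr del: of_nat_Suc)

lemma holomorphic_zeta_series: "zeta_series holomorphic_on {s. 1 < Re s}"
  unfolding zeta_series_def[abs_def]
proof (rule holomorphic_on_suminf_dominated)
  show "open {s. 1 < Re s}"
    by (simp add: open_halfspace_Re_gt)
  show "(\<lambda>s. of_nat (Suc k) powr (- s)) holomorphic_on {s. 1 < Re s}" for k
    by (intro holomorphic_intros)
  fix x assume "x \<in> {s. 1 < Re s}"
  define d where "d = (Re x - 1) / 2"
  have "d > 0"
    using \<open>x \<in> _\<close> by (simp add: d_def)
  moreover have "cball x d \<subseteq> {s. 1 < Re s}"
    using \<open>x \<in> _\<close> Re_ge_of_mem_cball[of _ x d] unfolding d_def by (force simp: field_simps)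
  moreover have "norm (of_nat (Suc n) powr (- y)) \<le> real (Suc n) powr (- (1 + d))"
    if "y \<in> cball x d" for n y
    using Re_ge_of_mem_cball[OF that] unfolding norm_of_nat_powr d_def
    by (intro powr_mono) (auto simp: field_simps)
  moreover have "summable (\<lambda>n. real (Suc n) powr (- (1 + d)))"
    using \<open>d > 0\<close> by (intro summable_real_Suc_powr) simp
  ultimately show "\<exists>d>0. cball x d \<subseteq> {s. 1 < Re s} \<and> (\<exists>M. summable M \<and>
      (\<forall>\<^sub>F n in sequentially. \<forall>y\<in>cball x d. norm (of_nat (Suc n) powr (- y)) \<le> M n))"
    by (intro exI[of _ d] conjI exI[of _ "\<lambda>n. real (Suc n) powr (- (1 + d))"] always_eventually)
       auto
qed

text \<open>The error of the order-\<open>K\<close> binomial expansion of \<open>(n + 2) powr (1 - s)\<close> around \<open>n + 1\<close>.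
  It is \<open>O(n powr (- Re s - K))\<close>, so its sum over \<open>n\<close> is holomorphic for \<open>Re s > 1 - K\<close>, while
  for \<open>Re s > 1\<close> the sum telescopes into zeta values.\<close>
definition binom_rem :: "nat \<Rightarrow> nat \<Rightarrow> complex \<Rightarrow> complex" where
  "binom_rem K n s = of_nat (Suc (Suc n)) powr (1 - s)
     - (\<Sum>j\<le>K. ((1 - s) gchoose j) * of_nat (Suc n) powr (1 - s - of_nat j))"

definition binom_rem_sum :: "nat \<Rightarrow> complex \<Rightarrow> complex" where
  "binom_rem_sum K s = (\<Sum>n. binom_rem K n s)"

lemma binom_rem_sum_eq_zeta_series:
  assumes s: "1 < Re s"
  shows "binom_rem_sum K s = - (\<Sum>j=1..K. ((1 - s) gchoose j) * zeta_series (s + of_nat j - 1)) - 1"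
proof -
  define f where "f n = (of_nat (Suc n) :: complex) powr (1 - s)" for n
  have "f \<longlonglongrightarrow> 0"
    unfolding f_def by (rule tendsto_neg_powr_complex_of_nat[OF filterlim_Suc]) (use s in simp)
  then have tel: "(\<lambda>n. f n - f (Suc n)) sums 1"
    using telescope_sums' by (fastforce simp: f_def)
  have shifted: "(\<lambda>n. of_nat (Suc n) powr (1 - s - of_nat j)) sums zeta_series (s + of_nat j - 1)"
    if "1 \<le> j" for j
    using sums_zeta_series[of "s + of_nat j - 1"] s that by (simp add: algebra_simps)
  have "{..K} = insert 0 {1..K}"
    by auto
  then have "binom_rem K n s = - (\<Sum>j=1..K. ((1 - s) gchoose j) * of_nat (Suc n) powr (1 - s - of_nat j))
      - (f n - f (Suc n))" for n
    by (simp add: binom_rem_def f_def)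
  moreover have "(\<lambda>n. - (\<Sum>j=1..K. ((1 - s) gchoose j) * of_nat (Suc n) powr (1 - s - of_nat j))
      - (f n - f (Suc n))) sums (- (\<Sum>j=1..K. ((1 - s) gchoose j) * zeta_series (s + of_nat j - 1)) - 1)"
    by (intro sums_diff sums_minus sums_sum sums_mult shifted tel) auto
  ultimately show ?thesis
    unfolding binom_rem_sum_def by (simp add: sums_iff)
qed

lemma binom_rem_eq_suminf:
  assumes "1 \<le> n"
  shows "binom_rem K n s = (\<Sum>j. ((1 - s) gchoose (j + Suc K)) * of_nat (Suc n) powr (1 - s - of_nat (j + Suc K)))"
proof -
  define g where "g j = ((1 - s) gchoose j) * of_nat (Suc n) powr (1 - s - of_nat j)" for j
  have "g sums (of_nat (Suc (Suc n)) powr (1 - s))"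
    using gen_binomial_complex''[of 1 "real (Suc n)" "1 - s"] assms unfolding g_def by (simp add: add.commute)
  then have "(\<lambda>j. g (j + Suc K)) sums (of_nat (Suc (Suc n)) powr (1 - s) - (\<Sum>j<Suc K. g j))"
    by (rule sums_split_initial_segment)
  then show ?thesis
    by (simp add: sums_iff binom_rem_def g_def lessThan_Suc_atMost)
qed

lemma norm_binom_rem_le:
  assumes Q: "1 + norm (1 - s) \<le> Q" "2 * Q \<le> real (Suc n)" and \<sigma>: "\<sigma> \<le> Re s"
  shows "norm (binom_rem K n s) \<le> 2 * Q ^ Suc K * real (Suc n) powr (- \<sigma> - real K)"
proof -
  define X where "X = real (Suc n)"
  define c where "c = Q ^ Suc K * X powr (- \<sigma> - real K)"
  define r where "r = Q / X"
  have "1 \<le> Q"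
    using Q(1) norm_ge_zero[of "1 - s"] by linarith
  then have "2 \<le> X" "1 \<le> n"
    using Q(2) by (simp_all add: X_def)
  have r: "0 \<le> r" "r \<le> 1 / 2"
    using Q \<open>1 \<le> Q\<close> \<open>2 \<le> X\<close> by (auto simp: r_def X_def field_simps)
  have bound: "norm (((1 - s) gchoose (j + Suc K)) * of_nat (Suc n) powr (1 - s - of_nat (j + Suc K)))
      \<le> c * r ^ j" for j
  proof -
    have "norm ((1 - s) gchoose (j + Suc K)) \<le> Q ^ (j + Suc K)"
      by (rule order_trans[OF norm_gbinomial_le power_mono[OF Q(1)]]) simp
    then have "norm (((1 - s) gchoose (j + Suc K)) * of_nat (Suc n) powr (1 - s - of_nat (j + Suc K)))
        \<le> Q ^ (j + Suc K) * X powr Re (1 - s - of_nat (j + Suc K))"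
      unfolding norm_mult norm_of_nat_powr X_def by (intro mult_right_mono) auto
    also have "X powr Re (1 - s - of_nat (j + Suc K)) \<le> X powr (- \<sigma> - real K - real j)"
      using \<sigma> \<open>2 \<le> X\<close> by (intro powr_mono) auto
    also have "Q ^ (j + Suc K) * X powr (- \<sigma> - real K - real j) = c * r ^ j"
      using \<open>2 \<le> X\<close> by (simp add: c_def r_def powr_diff powr_realpow power_add power_divide)
    finally show ?thesis
      using \<open>1 \<le> Q\<close> by (simp add: mult_left_mono)
  qed
  have geom: "(\<lambda>j. c * r ^ j) sums (c * (1 / (1 - r)))"
    using r by (intro sums_mult geometric_sums) simp
  have "norm (binom_rem K n s) \<le> c * (1 / (1 - r))"
    unfolding binom_rem_eq_suminf[OF \<open>1 \<le> n\<close>]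
    using norm_suminf_le[OF bound sums_summable[OF geom]] sums_unique[OF geom] by simp
  also have "\<dots> \<le> c * 2"
    using r \<open>1 \<le> Q\<close> by (intro mult_left_mono) (auto simp: c_def field_simps)
  finally show ?thesis
    by (simp add: c_def X_def mult_ac)
qed

lemma holomorphic_binom_rem_sum: "binom_rem_sum K holomorphic_on {s. 1 - real K < Re s}"
  unfolding binom_rem_sum_def[abs_def]
proof (rule holomorphic_on_suminf_dominated)
  show "open {s. 1 - real K < Re s}"
    by (simp add: open_halfspace_Re_gt)
  show "(\<lambda>s. binom_rem K n s) holomorphic_on {s. 1 - real K < Re s}" for n
    unfolding binom_rem_def by (intro holomorphic_intros)
  fix x assume "x \<in> {s. 1 - real K < Re s}"
  define d where "d = (Re x + real K - 1) / 2"
  define \<sigma> where "\<sigma> = Re x - d"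
  define Q where "Q = 1 + norm (1 - x) + d"
  have "0 < d" "1 < \<sigma> + real K"
    using \<open>x \<in> _\<close> by (auto simp: d_def \<sigma>_def field_simps)
  have \<sigma>_le: "\<sigma> \<le> Re y" if "y \<in> cball x d" for y
    unfolding \<sigma>_def using that by (rule Re_ge_of_mem_cball)
  have "cball x d \<subseteq> {s. 1 - real K < Re s}"
    using \<sigma>_le \<open>1 < \<sigma> + real K\<close> by fastforce
  moreover have "norm (binom_rem K n y) \<le> 2 * Q ^ Suc K * real (Suc n) powr (- (\<sigma> + real K))"
    if "nat \<lceil>2 * Q\<rceil> \<le> n" "y \<in> cball x d" for n y
  proof -
    have "1 + norm (1 - y) \<le> Q"
      using that(2) norm_triangle_ineq[of "1 - x" "x - y"] by (simp add: Q_def dist_norm)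
    moreover have "2 * Q \<le> real (Suc n)"
      using that(1) real_nat_ceiling_ge[of "2 * Q"] by linarith
    ultimately show ?thesis
      using norm_binom_rem_le[OF _ _ \<sigma>_le[OF that(2)]] by simp
  qed
  then have "\<forall>\<^sub>F n in sequentially. \<forall>y\<in>cball x d.
      norm (binom_rem K n y) \<le> 2 * Q ^ Suc K * real (Suc n) powr (- (\<sigma> + real K))"
    unfolding eventually_sequentially by blast
  moreover have "summable (\<lambda>n. 2 * Q ^ Suc K * real (Suc n) powr (- (\<sigma> + real K)))"
    by (intro summable_mult summable_real_Suc_powr \<open>1 < \<sigma> + real K\<close>)
  ultimately show "\<exists>d>0. cball x d \<subseteq> {s. 1 - real K < Re s} \<and> (\<exists>M. summable M \<and>
      (\<forall>\<^sub>F n in sequentially. \<forall>y\<in>cball x d. norm (binom_rem K n y) \<le> M n))"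
    using \<open>0 < d\<close> by blast
qed

lemma zeta_series_recurrence:
  assumes s: "1 < Re s"
  shows "(s - 1) * zeta_series s = 1 + binom_rem_sum (M + 2) s -
     (\<Sum>i\<le>M. ((1 - s) gchoose (i + 1)) / of_nat (i + 2) * ((s + of_nat i) * zeta_series (s + of_nat i + 1)))"
proof -
  have "of_nat (Suc (Suc i)) * ((1 - s) gchoose Suc (Suc i)) = - (s + of_nat i) * ((1 - s) gchoose Suc i)" for i
    using gbinomial_mult_1[of "1 - s" "Suc i"] unfolding of_nat_Suc by algebra
  then have gchoose_step:
    "((1 - s) gchoose Suc (Suc i)) = - ((1 - s) gchoose Suc i) * (s + of_nat i) / of_nat (Suc (Suc i))" for i
    by (simp add: field_simps del: of_nat_Suc)
  have "(\<Sum>j=1..M+2. ((1 - s) gchoose j) * zeta_series (s + of_nat j - 1))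
      = (1 - s) * zeta_series s + (\<Sum>j=0+2..M+2. ((1 - s) gchoose j) * zeta_series (s + of_nat j - 1))"
    by (subst sum.atLeast_Suc_atMost) (simp_all add: numeral_2_eq_2)
  also have "(\<Sum>j=0+2..M+2. ((1 - s) gchoose j) * zeta_series (s + of_nat j - 1))
      = - (\<Sum>i\<le>M. ((1 - s) gchoose (i + 1)) / of_nat (i + 2) * ((s + of_nat i) * zeta_series (s + of_nat i + 1)))"
    unfolding sum.shift_bounds_cl_nat_ivl atLeast0AtMost sum_negf[symmetric]
    by (intro sum.cong refl) (simp add: gchoose_step del: of_nat_Suc, simp add: add_ac)
  finally show ?thesis
    using binom_rem_sum_eq_zeta_series[OF s, of "M + 2"] by algebra
qed

text \<open>\<open>zeta_reg_approx M\<close> continues \<open>(s - 1) * zeta_series s\<close> to \<open>Re s > 1 - M\<close>: the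
  recurrence expresses its value at \<open>s\<close> by its values at \<open>s + 1, \<dots>, s + M + 1\<close>.\<close>
primrec zeta_reg_approx :: "nat \<Rightarrow> complex \<Rightarrow> complex" where
  "zeta_reg_approx 0 = (\<lambda>s. (s - 1) * zeta_series s)"
| "zeta_reg_approx (Suc M) = (\<lambda>s. 1 + binom_rem_sum (M + 2) s -
     (\<Sum>i\<le>M. ((1 - s) gchoose (i + 1)) / of_nat (i + 2) * zeta_reg_approx M (s + of_nat i + 1)))"

lemma zeta_reg_approx_eq_series: "1 < Re s \<Longrightarrow> zeta_reg_approx M s = (s - 1) * zeta_series s"
proof (induction M arbitrary: s)
  case 0
  then show ?case by simp
next
  case (Suc M)
  then have "zeta_reg_approx M (s + of_nat i + 1) = (s + of_nat i) * zeta_series (s + of_nat i + 1)" for i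
    by simp
  then show ?case
    using zeta_series_recurrence[OF Suc.prems, of M] by simp
qed

lemma holomorphic_zeta_reg_approx: "zeta_reg_approx M holomorphic_on {s. 1 - real M < Re s}"
proof (induction M)
  case 0
  then show ?case
    by (simp add: holomorphic_intros holomorphic_zeta_series)
next
  case (Suc M)
  have "binom_rem_sum (M + 2) holomorphic_on {s. 1 - real (Suc M) < Re s}"
    by (rule holomorphic_on_subset[OF holomorphic_binom_rem_sum]) auto
  moreover have "(\<lambda>s. zeta_reg_approx M (s + of_nat i + 1)) holomorphic_on {s. 1 - real (Suc M) < Re s}" for i
    by (rule holomorphic_on_compose_gen[OF _ Suc.IH, unfolded o_def]) (auto intro!: holomorphic_intros)
  ultimately show ?case
    by (auto intro!: holomorphic_intros)
qed

lemma zeta_reg_approx_indep: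
  assumes "1 - real M < Re s" "1 - real M' < Re s"
  shows "zeta_reg_approx M s = zeta_reg_approx M' s"
proof (rule analytic_continuation_open[where f = "zeta_reg_approx M"])
  let ?H = "{s. 1 - real (min M M') < Re s}"
  show "zeta_reg_approx M holomorphic_on ?H" "zeta_reg_approx M' holomorphic_on ?H"
    by (auto intro: holomorphic_on_subset[OF holomorphic_zeta_reg_approx])
  show "connected ?H"
    by (intro convex_connected convex_halfspace_Re_gt)
  show "{s. 1 < Re s} \<noteq> {}"
    by (auto intro!: exI[of _ 2])
qed (use assms in \<open>auto simp: open_halfspace_Re_gt zeta_reg_approx_eq_series min_def\<close>)

text \<open>The entire continuation of \<open>(s - 1) * zeta s\<close>.\<close>
definition zeta_reg :: "complex \<Rightarrow> complex" where
  "zeta_reg s = zeta_reg_approx (nat \<lceil>2 - Re s\<rceil>) s"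

lemma zeta_reg_eq_approx: "1 - real M < Re s \<Longrightarrow> zeta_reg s = zeta_reg_approx M s"
  unfolding zeta_reg_def using real_nat_ceiling_ge[of "2 - Re s"]
  by (intro zeta_reg_approx_indep) auto

lemma holomorphic_zeta_reg: "zeta_reg holomorphic_on UNIV"
proof -
  have "zeta_reg field_differentiable (at s)" for s
  proof -
    define M where "M = nat \<lceil>2 - Re s\<rceil>"
    have "zeta_reg holomorphic_on {s. 1 - real M < Re s}"
      using holomorphic_zeta_reg_approx by (rule holomorphic_transform) (simp add: zeta_reg_eq_approx)
    moreover have "1 - real M < Re s"
      using real_nat_ceiling_ge[of "2 - Re s"] by (simp add: M_def)
    ultimately show ?thesis
      using holomorphic_on_imp_differentiable_at open_halfspace_Re_gt by blast
  qed
  then show ?thesis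
    by (simp add: holomorphic_on_def field_differentiable_at_within)
qed

lemma zeta_reg_eq_series: "1 < Re s \<Longrightarrow> zeta_reg s = (s - 1) * zeta_series s"
  using zeta_reg_eq_approx[of 0 s] by (simp add: zeta_reg_approx_eq_series)

lemma zeta_reg_recurrence:
  assumes "- real M < Re s"
  shows "zeta_reg s = 1 + binom_rem_sum (M + 2) s -
     (\<Sum>i\<le>M. ((1 - s) gchoose (i + 1)) / of_nat (i + 2) * zeta_reg (s + of_nat i + 1))"
proof -
  have "zeta_reg_approx M (s + of_nat i + 1) = zeta_reg (s + of_nat i + 1)" for i
    using assms by (intro zeta_reg_eq_approx[symmetric]) simp
  moreover have "zeta_reg s = zeta_reg_approx (Suc M) s"
    using assms by (intro zeta_reg_eq_approx) simp
  ultimately show ?thesis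
    by simp
qed

lemma riemann_zeta_eq_zeta_reg:
  assumes "s \<noteq> 1"
  shows "riemann_zeta s = zeta_reg s / (s - 1)"
proof -
  define P where "P f \<longleftrightarrow> f holomorphic_on (UNIV - {1}) \<and>
      (\<forall>s. 1 < Re s \<longrightarrow> f s = (\<Sum>k. 1 / of_nat (Suc k) powr s))" for f
  define Z where "Z s = zeta_reg s / (s - 1)" for s
  have Z_series: "Z s = (\<Sum>k. 1 / of_nat (Suc k) powr s)" if "1 < Re s" for s
    using that zeta_reg_eq_series[OF that] by (auto simp: Z_def zeta_series_def powr_minus_divide)
  have Z_hol: "Z holomorphic_on (UNIV - {1})"
    unfolding Z_def by (intro holomorphic_intros holomorphic_on_subset[OF holomorphic_zeta_reg]) auto
  have "P Z"
    using Z_series Z_hol by (simp add: P_def)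
  then have "P (SOME f. P f)"
    by (rule someI[where P = P])
  moreover have "riemann_zeta = (SOME f. P f)"
    unfolding riemann_zeta_def P_def ..
  ultimately have "P riemann_zeta"
    by (simp only:)
  then have hol: "riemann_zeta holomorphic_on (UNIV - {1})"
    and eq: "\<And>s. 1 < Re s \<Longrightarrow> riemann_zeta s = Z s"
    using Z_series unfolding P_def by auto
  have "riemann_zeta s = Z s"
  proof (rule analytic_continuation_open[of "{s. 1 < Re s}" "UNIV - {1}" riemann_zeta Z])
    show "connected (UNIV - {1 :: complex})"
      using connected_punctured_universe[of "1 :: complex"] by (simp add: Compl_eq_Diff_UNIV)
    show "{s. 1 < Re s} \<noteq> {}"
      by (auto intro!: exI[of _ 2])
    show "open {s. 1 < Re s}"
      by (rule open_halfspace_Re_gt)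
    show "{s. 1 < Re s} \<subseteq> UNIV - {1}"
      by auto
  qed (use hol Z_hol eq assms in auto)
  then show ?thesis
    by (simp add: Z_def)
qed

lemma holomorphic_riemann_zeta: "riemann_zeta holomorphic_on (UNIV - {1})"
proof (rule holomorphic_transform[of "\<lambda>s. zeta_reg s / (s - 1)"])
  show "(\<lambda>s. zeta_reg s / (s - 1)) holomorphic_on (UNIV - {1})"
    by (intro holomorphic_intros holomorphic_on_subset[OF holomorphic_zeta_reg]) auto
qed (simp add: riemann_zeta_eq_zeta_reg)

lemma riemann_zeta_eq_series:
  assumes "1 < Re s"
  shows "riemann_zeta s = zeta_series s"
proof -
  have "s \<noteq> 1"
    using assms by auto
  then show ?thesis
    by (simp add: riemann_zeta_eq_zeta_reg zeta_reg_eq_series[OF assms])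
qed

section \<open>Bernoulli numbers\<close>

lemma gbinomial_1_plus_of_nat: "((1 + of_nat m :: complex) gchoose j) = of_nat (Suc m choose j)"
  by (simp add: binomial_gbinomial)

text \<open>At \<open>s = -m\<close> the binomial expansion of \<open>(n + 2) ^ (m + 1)\<close> terminates.\<close>
lemma binom_rem_neg_nat:
  assumes "m < K"
  shows "binom_rem K n (- of_nat m) = 0"
proof -
  have pow: "(of_nat k :: complex) powr of_nat l = of_nat k ^ l" if "k > 0" for k l
    using that by (intro powr_complexpow) simp
  have "(\<Sum>j\<le>K. ((1 + of_nat m) gchoose j) * of_nat (Suc n) powr (1 + of_nat m - of_nat j))
      = (\<Sum>j\<le>Suc m. of_nat (Suc m choose j) * of_nat (Suc n) ^ (Suc m - j) :: complex)"
  proof (rule sum.mono_neutral_cong_right)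
    show "\<forall>j\<in>{..K} - {..Suc m}. ((1 + of_nat m) gchoose j) * of_nat (Suc n) powr (1 + of_nat m - of_nat j) = (0 :: complex)"
      by (simp add: gbinomial_1_plus_of_nat)
    show "((1 + of_nat m) gchoose j) * of_nat (Suc n) powr (1 + of_nat m - of_nat j)
        = (of_nat (Suc m choose j) * of_nat (Suc n) ^ (Suc m - j) :: complex)" if "j \<in> {..Suc m}" for j
    proof -
      have "(1 + of_nat m - of_nat j :: complex) = of_nat (Suc m - j)"
        using that by (simp add: of_nat_diff)
      then show ?thesis
        by (simp only: gbinomial_1_plus_of_nat pow zero_less_Suc)
    qed
  qed (use assms in auto)
  also have "\<dots> = of_nat (Suc (Suc n)) ^ Suc m"
    using binomial_ring[of 1 "of_nat (Suc n) :: complex" "Suc m"] by (simp add: add.commute)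
  also have "\<dots> = of_nat (Suc (Suc n)) powr (1 + of_nat m)"
    using pow[of "Suc (Suc n)" "Suc m", OF zero_less_Suc] by (simp only: of_nat_Suc[of m])
  finally show ?thesis
    unfolding binom_rem_def by (simp only: diff_minus_eq_add diff_self)
qed

lemma zeta_reg_1: "zeta_reg 1 = 1"
proof -
  have "binom_rem 2 n 1 = 0" for n
    unfolding binom_rem_def by (simp add: gbinomial_0_left numeral_2_eq_2 complex_eq_iff)
  then have "binom_rem_sum 2 1 = 0"
    by (simp add: binom_rem_sum_def)
  then show ?thesis
    using zeta_reg_recurrence[of 0 1] by (simp add: gbinomial_0_left numeral_2_eq_2)
qed

text \<open>The Bernoulli numbers with \<open>B\<^sub>1 = 1/2\<close>, i.e. the coefficients of \<open>x e\<^sup>x / (e\<^sup>x - 1)\<close>;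
  for \<open>k > 0\<close> they equal \<open>-k \<zeta>(1 - k)\<close>.\<close>
definition bernoulli_plus :: "nat \<Rightarrow> complex" where
  "bernoulli_plus k = zeta_reg (1 - of_nat k)"

lemma bernoulli_plus_recurrence:
  "bernoulli_plus (Suc m) = 1 - (\<Sum>i\<le>m. of_nat (Suc m choose (i + 1)) / of_nat (i + 2) * bernoulli_plus (m - i))"
proof -
  have "zeta_reg (- of_nat m) = 1 + binom_rem_sum (Suc m + 2) (- of_nat m) -
     (\<Sum>i\<le>Suc m. ((1 + of_nat m) gchoose (i + 1)) / of_nat (i + 2) * zeta_reg (- of_nat m + of_nat i + 1))"
    using zeta_reg_recurrence[of "Suc m" "- of_nat m"] by simp
  also have "binom_rem_sum (Suc m + 2) (- of_nat m) = 0"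
    by (simp add: binom_rem_sum_def binom_rem_neg_nat)
  also have "(\<Sum>i\<le>Suc m. ((1 + of_nat m) gchoose (i + 1)) / of_nat (i + 2) * zeta_reg (- of_nat m + of_nat i + 1))
      = (\<Sum>i\<le>m. ((1 + of_nat m) gchoose (i + 1)) / of_nat (i + 2) * zeta_reg (- of_nat m + of_nat i + 1))"
    by (simp add: gbinomial_1_plus_of_nat del: binomial_Suc_Suc)
  also have "(\<Sum>i\<le>m. ((1 + of_nat m) gchoose (i + 1)) / of_nat (i + 2) * zeta_reg (- of_nat m + of_nat i + 1))
      = (\<Sum>i\<le>m. of_nat (Suc m choose (i + 1)) / of_nat (i + 2) * bernoulli_plus (m - i))"
  proof (intro sum.cong refl)
    fix i assume "i \<in> {..m}"
    then have "(- of_nat m + of_nat i + 1 :: complex) = 1 - of_nat (m - i)"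
      by (simp add: of_nat_diff)
    then show "((1 + of_nat m) gchoose (i + 1)) / of_nat (i + 2) * zeta_reg (- of_nat m + of_nat i + 1)
        = of_nat (Suc m choose (i + 1)) / of_nat (i + 2) * bernoulli_plus (m - i)"
      by (simp add: bernoulli_plus_def gbinomial_1_plus_of_nat del: binomial_Suc_Suc)
  qed
  finally show ?thesis
    by (simp add: bernoulli_plus_def)
qed

lemma bernoulli_plus_0: "bernoulli_plus 0 = 1"
  by (simp add: bernoulli_plus_def zeta_reg_1)

lemma bernoulli_plus_1: "bernoulli_plus (Suc 0) = 1 / 2"
  using bernoulli_plus_recurrence[of 0] by (simp add: bernoulli_plus_0)

lemma bernoulli_plus_binomial_sum:
  "(\<Sum>k\<le>m. of_nat (Suc m choose k) * bernoulli_plus k) = of_nat (Suc m)"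
proof (cases m)
  case 0
  then show ?thesis
    by (simp add: bernoulli_plus_0)
next
  case (Suc l)
  define n where "n = Suc (Suc l)"
  have coeff: "of_nat n * (of_nat (Suc l choose (i + 1)) / of_nat (i + 2)) = (of_nat (n choose (i + 2)) :: complex)" for i
  proof -
    have "(of_nat n * of_nat (Suc l choose (i + 1)) :: complex) = of_nat (n choose (i + 2)) * of_nat (i + 2)"
      using Suc_times_binomial_eq[of "Suc l" "Suc i"] unfolding n_def
      by (metis Suc_eq_plus1 add_2_eq_Suc' of_nat_mult)
    then show ?thesis
      by (simp add: field_simps del: of_nat_Suc)
  qed
  have "of_nat n * bernoulli_plus (Suc l) = of_nat n * 1
      - (\<Sum>i\<le>l. of_nat n * (of_nat (Suc l choose (i + 1)) / of_nat (i + 2) * bernoulli_plus (l - i)))"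
    by (simp only: bernoulli_plus_recurrence[of l] right_diff_distrib sum_distrib_left)
  also have "\<dots> = of_nat n - (\<Sum>i\<le>l. of_nat (n choose (i + 2)) * bernoulli_plus (l - i))"
    by (simp only: mult.assoc[symmetric] coeff mult_1_right)
  also have "(\<Sum>i\<le>l. of_nat (n choose (i + 2)) * bernoulli_plus (l - i))
      = (\<Sum>k\<le>l. of_nat (n choose k) * bernoulli_plus k)"
  proof (rule sum.reindex_bij_witness[of _ "\<lambda>k. l - k" "\<lambda>i. l - i"])
    fix i assume "i \<in> {..l}"
    then show "of_nat (n choose (l - i)) * bernoulli_plus (l - i) = of_nat (n choose (i + 2)) * bernoulli_plus (l - i)"
      using binomial_symmetric[of "l - i" n] by (simp add: n_def Suc_diff_le)
  qed auto
  finally have "(\<Sum>k\<le>l. of_nat (n choose k) * bernoulli_plus k) + of_nat (n choose Suc l) * bernoulli_plus (Suc l)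
      = of_nat n"
    by (simp add: n_def)
  then show ?thesis
    by (simp add: Suc n_def)
qed

definition bernoulli_plus_egf :: "complex fps" where
  "bernoulli_plus_egf = Abs_fps (\<lambda>k. bernoulli_plus k / fact k)"

lemma bernoulli_plus_egf_times_exp: "bernoulli_plus_egf * (fps_exp 1 - 1) = fps_X * fps_exp 1"
proof (rule fps_ext)
  fix n
  show "(bernoulli_plus_egf * (fps_exp 1 - 1)) $ n = (fps_X * fps_exp 1) $ n"
  proof (cases n)
    case 0
    then show ?thesis
      by (simp add: fps_mult_nth)
  next
    case (Suc m)
    have "{0..n} = insert n {..m}"
      using Suc by auto
    then have "(bernoulli_plus_egf * (fps_exp 1 - 1)) $ n
        = bernoulli_plus_egf $ n * (fps_exp 1 - 1) $ 0 + (\<Sum>k\<le>m. bernoulli_plus_egf $ k * (fps_exp 1 - 1) $ (n - k))"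
      using Suc by (simp add: fps_mult_nth)
    also have "\<dots> = (\<Sum>k\<le>m. bernoulli_plus_egf $ k * (fps_exp 1 - 1) $ (n - k))"
      by simp
    also have "\<dots> = (\<Sum>k\<le>m. bernoulli_plus k / (fact k * fact (n - k)))"
      using Suc by (intro sum.cong refl) (simp add: bernoulli_plus_egf_def Suc_diff_le ring_distribs)
    also have "\<dots> = (\<Sum>k\<le>m. of_nat (n choose k) * bernoulli_plus k) / fact n"
      unfolding sum_divide_distrib by (intro sum.cong refl) (simp add: binomial_fact Suc del: of_nat_Suc)
    also have "\<dots> = (fps_X * fps_exp 1) $ n"
      using Suc by (simp add: bernoulli_plus_binomial_sum fact_Suc del: of_nat_Suc)
    finally show ?thesis .
  qed
qed

lemma bernoulli_plus_egf_riccati: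
  "fps_X * fps_deriv bernoulli_plus_egf + bernoulli_plus_egf * bernoulli_plus_egf
     - bernoulli_plus_egf - fps_X * bernoulli_plus_egf = 0"
proof -
  define B where "B = bernoulli_plus_egf"
  define E :: "complex fps" where "E = fps_exp 1"
  have eq: "B * (E - 1) = fps_X * E"
    unfolding B_def E_def by (rule bernoulli_plus_egf_times_exp)
  then have "fps_deriv (B * (E - 1)) = fps_deriv (fps_X * E)"
    by simp
  then have "fps_deriv B * (E - 1) + B * E = E + fps_X * E"
    by (simp add: E_def algebra_simps)
  with eq have "(fps_X * fps_deriv B + B * B - B - fps_X * B) * E = 0"
    by algebra
  moreover have "E $ 0 \<noteq> 0"
    by (simp add: E_def)
  ultimately show ?thesis
    by (auto simp: B_def)
qed

text \<open>\<open>x e\<^sup>x / (e\<^sup>x - 1) - x / 2 = (x / 2) coth (x / 2)\<close> is even.\<close>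
definition bernoulli_even_egf :: "complex fps" where
  "bernoulli_even_egf = bernoulli_plus_egf - fps_const (1 / 2) * fps_X"

lemma bernoulli_even_egf_nth:
  "bernoulli_even_egf $ n = bernoulli_plus n / fact n - (if n = 1 then 1 / 2 else 0)"
  by (simp add: bernoulli_even_egf_def bernoulli_plus_egf_def fps_X_nth)

lemma bernoulli_even_egf_recurrence:
  assumes "2 \<le> n"
  shows "of_nat (Suc n) * bernoulli_even_egf $ n
    = (if n = 2 then 1 / 4 else 0) - (\<Sum>i=1..n-1. bernoulli_even_egf $ i * bernoulli_even_egf $ (n - i))"
proof -
  define C where "C = bernoulli_even_egf"
  define S where "S = (\<Sum>i=1..n-1. C $ i * C $ (n - i))"
  define q :: complex where "q = (if n = 2 then 1 / 4 else 0)"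
  have riccati: "fps_X * fps_deriv C + C * C - C - fps_const (1 / 4) * fps_X ^ 2 = 0"
  proof -
    define h :: "complex fps" where "h = fps_const (1 / 2)"
    have "h + h = 1" "h * h = fps_const (1 / 4)"
      by (simp_all add: h_def flip: fps_const_add fps_const_mult)
    moreover have "C = bernoulli_plus_egf - h * fps_X" "fps_deriv C = fps_deriv bernoulli_plus_egf - h"
      by (simp_all add: C_def h_def bernoulli_even_egf_def)
    ultimately show ?thesis
      using bernoulli_plus_egf_riccati by algebra
  qed
  have "(C * C) $ n = C $ n + S + C $ n"
  proof -
    have "{0..n} = insert 0 (insert n {1..n-1})"
      using assms by auto
    moreover have "C $ 0 = 1"
      by (simp add: C_def bernoulli_even_egf_nth bernoulli_plus_0)
    ultimately show ?thesis
      using assms by (simp add: fps_mult_nth S_def)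
  qed
  moreover have "(fps_X * fps_deriv C) $ n = of_nat n * C $ n"
    using assms by simp
  moreover have "(fps_const (1 / 4) * fps_X ^ 2) $ n = q"
    by (simp add: q_def)
  ultimately have "0 = of_nat n * C $ n + (C $ n + S + C $ n) - C $ n - q"
    using arg_cong[OF riccati, of "\<lambda>f. f $ n"] by (simp only: fps_add_nth fps_sub_nth fps_zero_nth)
  then show ?thesis
    unfolding C_def[symmetric] S_def[symmetric] q_def[symmetric] by (simp add: algebra_simps)
qed

lemma bernoulli_even_egf_odd: "odd n \<Longrightarrow> bernoulli_even_egf $ n = 0"
proof (induction n rule: less_induct)
  case (less n)
  show ?case
  proof (cases "n = 1")
    case True
    then show ?thesis
      by (simp add: bernoulli_even_egf_nth bernoulli_plus_1)
  next
    case False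
    with less.prems have "3 \<le> n"
      by presburger
    have "bernoulli_even_egf $ i * bernoulli_even_egf $ (n - i) = 0" if "i \<in> {1..n-1}" for i
    proof (cases "odd i")
      case True
      then show ?thesis
        using less.IH[of i] that by auto
    next
      case False
      then have "odd (n - i)"
        using less.prems that by auto
      then show ?thesis
        using less.IH[of "n - i"] that by auto
    qed
    then have "(\<Sum>i=1..n-1. bernoulli_even_egf $ i * bernoulli_even_egf $ (n - i)) = 0"
      by (intro sum.neutral) blast
    then have "of_nat (Suc n) * bernoulli_even_egf $ n = 0"
      using bernoulli_even_egf_recurrence[of n] \<open>3 \<le> n\<close> by simp
    then show ?thesis
      by (simp del: of_nat_Suc)
  qed
qed

lemma Im_bernoulli_even_egf: "Im (bernoulli_even_egf $ n) = 0"
proof (induction n rule: less_induct)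
  case (less n)
  show ?case
  proof (cases "2 \<le> n")
    case False
    then have "n = 0 \<or> n = 1"
      by auto
    then show ?thesis
      by (auto simp: bernoulli_even_egf_nth bernoulli_plus_0 bernoulli_plus_1)
  next
    case True
    have "Im (\<Sum>i=1..n-1. bernoulli_even_egf $ i * bernoulli_even_egf $ (n - i)) = 0"
      unfolding Im_sum using less.IH True by (intro sum.neutral) auto
    moreover have "bernoulli_even_egf $ n
        = ((if n = 2 then 1 / 4 else 0) - (\<Sum>i=1..n-1. bernoulli_even_egf $ i * bernoulli_even_egf $ (n - i)))
          / of_nat (Suc n)"
      using bernoulli_even_egf_recurrence[OF True] by (simp add: field_simps del: of_nat_Suc)
    ultimately show ?thesis
      by (simp add: Im_divide_of_nat del: of_nat_Suc)
  qed
qed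

definition bernoulli_even_coeff :: "nat \<Rightarrow> real" where
  "bernoulli_even_coeff n = Re (bernoulli_even_egf $ n)"

lemma bernoulli_even_egf_eq_coeff: "bernoulli_even_egf $ n = of_real (bernoulli_even_coeff n)"
  using Im_bernoulli_even_egf[of n] by (simp add: bernoulli_even_coeff_def complex_eq_iff)

lemma bernoulli_even_coeff_recurrence:
  assumes "2 \<le> n"
  shows "real (Suc n) * bernoulli_even_coeff n
    = (if n = 2 then 1 / 4 else 0) - (\<Sum>i=1..n-1. bernoulli_even_coeff i * bernoulli_even_coeff (n - i))"
  using arg_cong[OF bernoulli_even_egf_recurrence[OF assms], of Re]
  by (simp add: bernoulli_even_egf_eq_coeff Re_sum del: of_nat_Suc)

lemma bernoulli_even_coeff_odd: "odd n \<Longrightarrow> bernoulli_even_coeff n = 0"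
  by (simp add: bernoulli_even_coeff_def bernoulli_even_egf_odd)

text \<open>Writing \<open>c\<close> for \<open>bernoulli_even_coeff\<close>, the recurrence expresses \<open>(2m + 1) c\<^sub>2\<^sub>m\<close> as
  \<open>-\<Sum> c\<^sub>i c\<^sub>2\<^sub>m\<^sub>-\<^sub>i\<close>; only even \<open>i\<close> contribute, and by induction each of these products has
  sign \<open>(-1)\<^sup>m\<close>, so the \<open>c\<^sub>2\<^sub>m\<close> alternate in sign.\<close>
lemma bernoulli_even_coeff_product_sign:
  assumes IH: "\<And>l. 1 \<le> l \<Longrightarrow> l < m \<Longrightarrow> 0 < (-1) ^ (l + 1) * bernoulli_even_coeff (2 * l)"
    and i: "i \<in> {1..2 * m - 1}"
  shows "0 \<le> (-1) ^ m * (bernoulli_even_coeff i * bernoulli_even_coeff (2 * m - i))"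
    and "even i \<Longrightarrow> 0 < (-1) ^ m * (bernoulli_even_coeff i * bernoulli_even_coeff (2 * m - i))"
proof -
  let ?c = bernoulli_even_coeff
  show pos: "0 < (-1) ^ m * (?c i * ?c (2 * m - i))" if "even i"
  proof -
    obtain l where l: "i = 2 * l"
      using \<open>even i\<close> by (auto elim: evenE)
    with i have "1 \<le> l" "l < m"
      by auto
    then have "(-1 :: real) ^ m = (-1) ^ (l + 1) * (-1) ^ (m - l + 1)"
      by (simp flip: power_add)
    moreover have "2 * m - i = 2 * (m - l)"
      using l by simp
    ultimately have "(-1) ^ m * (?c i * ?c (2 * m - i))
        = ((-1) ^ (l + 1) * ?c (2 * l)) * ((-1) ^ (m - l + 1) * ?c (2 * (m - l)))"
      using l by (simp only: mult_ac)
    moreover have "0 < (-1) ^ (l + 1) * ?c (2 * l)" "0 < (-1) ^ (m - l + 1) * ?c (2 * (m - l))"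
      using IH[of l] IH[of "m - l"] \<open>1 \<le> l\<close> \<open>l < m\<close> by auto
    ultimately show ?thesis
      by (simp only: mult_pos_pos)
  qed
  show "0 \<le> (-1) ^ m * (?c i * ?c (2 * m - i))"
    using pos by (cases "even i") (auto simp: bernoulli_even_coeff_odd)
qed

lemma bernoulli_even_coeff_sign: "1 \<le> m \<Longrightarrow> 0 < (-1) ^ (m + 1) * bernoulli_even_coeff (2 * m)"
proof (induction m rule: less_induct)
  case (less m)
  let ?c = bernoulli_even_coeff
  show ?case
  proof (cases "m = 1")
    case True
    then show ?thesis
      using bernoulli_even_coeff_recurrence[of 2] bernoulli_even_coeff_odd[of 1] by simp
  next
    case False
    with less.prems have "2 \<le> m"
      by simp
    note product_sign = bernoulli_even_coeff_product_sign[of m, OF less.IH]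
    have "0 < (\<Sum>i=1..2*m-1. (-1) ^ m * (?c i * ?c (2 * m - i)))"
      using \<open>2 \<le> m\<close> product_sign by (intro sum_pos2[where i = 2]) auto
    also have "\<dots> = (-1) ^ m * (\<Sum>i=1..2*m-1. ?c i * ?c (2 * m - i))"
      by (simp only: sum_distrib_left)
    also have "(\<Sum>i=1..2*m-1. ?c i * ?c (2 * m - i)) = - (real (Suc (2 * m)) * ?c (2 * m))"
      using bernoulli_even_coeff_recurrence[of "2 * m"] \<open>2 \<le> m\<close> by simp
    also have "(-1) ^ m * - (real (Suc (2 * m)) * ?c (2 * m)) = (-1) ^ (m + 1) * ?c (2 * m) * real (Suc (2 * m))"
      by simp
    finally show ?thesis
      by (rule zero_less_mult_pos2) simp
  qed
qed

lemma bernoulli_plus_odd: "1 \<le> k \<Longrightarrow> bernoulli_plus (2 * k + 1) = 0"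
  using bernoulli_even_egf_odd[of "2 * k + 1"] by (simp add: bernoulli_even_egf_nth del: fact_Suc)

lemma bernoulli_plus_even_nonzero: "bernoulli_plus (2 * k) \<noteq> 0"
proof (cases "k = 0")
  case True
  then show ?thesis
    by (simp add: bernoulli_plus_0)
next
  case False
  then have "bernoulli_even_egf $ (2 * k) \<noteq> 0"
    using bernoulli_even_coeff_sign[of k] by (auto simp: bernoulli_even_egf_eq_coeff)
  then show ?thesis
    by (simp add: bernoulli_even_egf_nth)
qed

section \<open>Faulhaber's formula and the double zeta series\<close>

definition faulhaber_coeff :: "nat \<Rightarrow> nat \<Rightarrow> complex" where
  "faulhaber_coeff n k = fact n * bernoulli_plus k / (fact k * fact (n + 1 - k))"

text \<open>Compare coefficients in \<open>(e\<^sup>N\<^sup>x - 1) B(x) = x (e\<^sup>x + \<dots> + e\<^sup>N\<^sup>x)\<close>, where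
  \<open>B(x) (e\<^sup>x - 1) = x e\<^sup>x\<close>.\<close>
lemma sum_powers_faulhaber:
  "(\<Sum>m<N. of_nat (Suc m) ^ n) = (\<Sum>k\<le>n. faulhaber_coeff n k * of_nat N ^ (n + 1 - k))"
proof -
  define E :: "complex fps" where "E = fps_exp 1"
  define B where "B = bernoulli_plus_egf"
  have E_pow_nth: "(E ^ j) $ i = of_nat j ^ i / fact i" for i j
    by (simp add: E_def fps_exp_power_mult)
  have "(E ^ N - 1) * B = fps_X * (\<Sum>m<N. E ^ Suc m)"
  proof -
    have "(\<Sum>m<N. E ^ m) * (E - 1) = E ^ N - 1"
      by (induction N) (simp_all add: algebra_simps)
    then have "(E ^ N - 1) * B = (\<Sum>m<N. E ^ m) * (B * (E - 1))"
      by (simp add: mult_ac)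
    also have "\<dots> = fps_X * (\<Sum>m<N. E ^ Suc m)"
      by (simp add: B_def E_def bernoulli_plus_egf_times_exp sum_distrib_left sum_distrib_right mult_ac)
    finally show ?thesis .
  qed
  then have "(\<Sum>m<N. of_nat (Suc m) ^ n / fact n) = ((E ^ N - 1) * B) $ Suc n"
    by (simp add: fps_sum_nth E_pow_nth del: power_Suc)
  also have "\<dots> = (\<Sum>i=1..Suc n. of_nat N ^ i / fact i * B $ (Suc n - i))"
  proof -
    have "{0..Suc n} = insert 0 {1..Suc n}"
      by auto
    then show ?thesis
      by (simp add: fps_mult_nth E_pow_nth)
  qed
  also have "\<dots> = (\<Sum>k\<le>n. of_nat N ^ (n + 1 - k) / fact (n + 1 - k) * B $ k)"
    by (rule sum.reindex_bij_witness[of _ "\<lambda>k. n + 1 - k" "\<lambda>i. n + 1 - i"]) auto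
  finally have "(\<Sum>m<N. of_nat (Suc m) ^ n) = fact n * (\<Sum>k\<le>n. of_nat N ^ (n + 1 - k) / fact (n + 1 - k) * B $ k)"
    unfolding sum_divide_distrib[symmetric] divide_eq_eq by (simp add: mult.commute)
  also have "\<dots> = (\<Sum>k\<le>n. faulhaber_coeff n k * of_nat N ^ (n + 1 - k))"
    unfolding sum_distrib_left
    by (intro sum.cong refl) (simp add: faulhaber_coeff_def B_def bernoulli_plus_egf_def field_simps)
  finally show ?thesis .
qed

text \<open>The summand \<open>m\<^sup>n (m + j) powr (- s - n)\<close> of \<open>dz_series\<close>, indexed by \<open>p = m + j - 1\<close> and
  \<open>i = m - 1 < p\<close>.\<close>
definition dz_term :: "nat \<Rightarrow> complex \<Rightarrow> nat \<Rightarrow> nat \<Rightarrow> complex" where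
  "dz_term n s p i = of_nat (Suc i) ^ n * of_nat (Suc p) powr (- (s + of_nat n))"

lemma dz_term_summable:
  assumes "2 < Re s"
  shows "(\<lambda>(p, i). dz_term n s p i) summable_on (SIGMA p:UNIV. {..<p})"
proof -
  have bound: "(\<Sum>i<p. norm (dz_term n s p i)) \<le> real (Suc p) powr (- (Re s - 1))" for p
  proof -
    have "real (Suc i) ^ n \<le> real (Suc p) ^ n" if "i < p" for i
      using that by (intro power_mono) auto
    then have "(\<Sum>i<p. norm (dz_term n s p i)) \<le> (\<Sum>i<p. real (Suc p) ^ n * real (Suc p) powr (- (Re s + real n)))"
      unfolding dz_term_def norm_mult norm_power norm_of_nat_powr norm_of_nat
      by (intro sum_mono mult_right_mono) auto
    also have "\<dots> \<le> real (Suc p) * (real (Suc p) ^ n * real (Suc p) powr (- (Re s + real n)))"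
      by (simp add: mult_right_mono)
    also have "\<dots> = real (Suc p) powr (real n + 1) * real (Suc p) powr (- (Re s + real n))"
      by (simp add: powr_add powr_realpow del: of_nat_Suc)
    also have "\<dots> = real (Suc p) powr (- (Re s - 1))"
      by (simp flip: powr_add)
    finally show ?thesis .
  qed
  have "summable (\<lambda>p. \<Sum>i<p. norm (dz_term n s p i))"
    using assms bound
    by (intro summable_comparison_test[OF _ summable_real_Suc_powr[of "Re s - 1"]])
       (auto intro!: exI[of _ 0] simp: sum_nonneg)
  then have "(\<lambda>p. norm (\<Sum>\<^sub>\<infinity>i\<in>{..<p}. norm (dz_term n s p i))) summable_on UNIV"
    by (simp add: summable_on_UNIV_nonneg_real_iff sum_nonneg)
  then have "(\<lambda>x. norm ((\<lambda>(p, i). dz_term n s p i) x)) summable_on (SIGMA p:UNIV. {..<p})"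
    by (subst Infinite_Sum.abs_summable_on_Sigma_iff) auto
  then show ?thesis
    by (rule abs_summable_summable)
qed

lemma sum_dz_term:
  "(\<Sum>i<p. dz_term n s p i)
     = (\<Sum>k\<le>n. faulhaber_coeff n k * of_nat (Suc p) powr (- (s + of_nat k - 1))) - of_nat (Suc p) powr (- s)"
proof -
  define x :: complex where "x = of_nat (Suc p)"
  have x: "x \<noteq> 0"
    unfolding x_def by (rule of_nat_neq_0)
  have shift: "x powr (- (s + of_nat n)) * x ^ j = x powr (- (s + of_nat n) + of_nat j)" for j
    using x by (simp add: powr_add)
  have "(\<Sum>i<p. dz_term n s p i) = x powr (- (s + of_nat n)) * ((\<Sum>i<Suc p. of_nat (Suc i) ^ n) - x ^ n)"
    by (simp add: dz_term_def sum_distrib_right x_def mult_ac)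
  also have "\<dots> = x powr (- (s + of_nat n)) * ((\<Sum>k\<le>n. faulhaber_coeff n k * x ^ (n + 1 - k)) - x ^ n)"
    unfolding x_def sum_powers_faulhaber ..
  also have "\<dots> = (\<Sum>k\<le>n. faulhaber_coeff n k * (x powr (- (s + of_nat n)) * x ^ (n + 1 - k)))
      - x powr (- (s + of_nat n)) * x ^ n"
    by (simp add: right_diff_distrib sum_distrib_left mult_ac)
  also have "\<dots> = (\<Sum>k\<le>n. faulhaber_coeff n k * x powr (- (s + of_nat k - 1))) - x powr (- s)"
    unfolding shift by (intro arg_cong2[where f = minus] sum.cong refl) (auto simp: of_nat_diff algebra_simps)
  finally show ?thesis
    by (simp only: x_def)
qed

text \<open>Faulhaber's formula turns the inner sum over \<open>m\<close> in \<open>dz_series\<close> into a combination of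
  shifted zeta functions.\<close>
definition double_zeta :: "nat \<Rightarrow> complex \<Rightarrow> complex" where
  "double_zeta n s = (\<Sum>k\<le>n. faulhaber_coeff n k * riemann_zeta (s + of_nat k - 1)) - riemann_zeta s"

lemma double_zeta_eq_dz_series:
  assumes s: "2 < Re s"
  shows "double_zeta n s = dz_series n s"
proof -
  have summable: "(\<lambda>(p, i). dz_term n s p i) summable_on (SIGMA p:UNIV. {..<p})"
    using s by (rule dz_term_summable)
  have bij: "bij_betw (\<lambda>(p, i). (Suc i, p - i)) (SIGMA p:UNIV. {..<p}) ({1..} \<times> {1..})"
    by (rule bij_betwI[where g = "\<lambda>(m, j). (m + j - 1, m - 1)"]) auto
  have "dz_series n s = (\<Sum>\<^sub>\<infinity>(p, i)\<in>(SIGMA p:UNIV. {..<p}). dz_term n s p i)"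
    unfolding dz_series_def infsum_reindex_bij_betw[OF bij, symmetric]
    by (intro infsum_cong) (auto simp: dz_term_def)
  also have "\<dots> = (\<Sum>\<^sub>\<infinity>p. \<Sum>i<p. dz_term n s p i)"
    using infsum_Sigma'_banach[OF summable] by simp
  also have "\<dots> = (\<Sum>k\<le>n. faulhaber_coeff n k * zeta_series (s + of_nat k - 1)) - zeta_series s"
  proof -
    have "(\<lambda>p. \<Sum>i<p. dz_term n s p i) summable_on UNIV"
      using summable_on_Sigma_banach[OF summable] by simp
    moreover have "(\<lambda>p. \<Sum>i<p. dz_term n s p i)
        sums ((\<Sum>k\<le>n. faulhaber_coeff n k * zeta_series (s + of_nat k - 1)) - zeta_series s)"
      unfolding sum_dz_term using s by (intro sums_diff sums_sum sums_mult sums_zeta_series) auto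
    ultimately show ?thesis
      using has_sum_imp_sums[OF has_sum_infsum] sums_unique2 by blast
  qed
  also have "\<dots> = double_zeta n s"
    using s by (simp add: double_zeta_def riemann_zeta_eq_series)
  finally show ?thesis ..
qed

section \<open>Poles and residues\<close>

lemma riemann_zeta_1_minus_nat:
  assumes "0 < k"
  shows "riemann_zeta (1 - of_nat k) = - bernoulli_plus k / of_nat k"
proof -
  have "(1 - of_nat k :: complex) \<noteq> 1"
    using assms by simp
  then show ?thesis
    by (simp add: riemann_zeta_eq_zeta_reg bernoulli_plus_def)
qed

lemma riemann_zeta_0: "riemann_zeta 0 = - 1 / 2"
  using riemann_zeta_1_minus_nat[of 1] by (simp add: bernoulli_plus_1)

lemma faulhaber_coeff_0: "faulhaber_coeff n 0 = 1 / (of_nat n + 1)"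
  by (simp add: faulhaber_coeff_def bernoulli_plus_0 add.commute)

lemma faulhaber_coeff_1: "1 \<le> n \<Longrightarrow> faulhaber_coeff n (Suc 0) = 1 / 2"
  by (simp add: faulhaber_coeff_def bernoulli_plus_1)

lemma faulhaber_coeff_eq_0_iff: "faulhaber_coeff n k = 0 \<longleftrightarrow> bernoulli_plus k = 0"
  by (simp add: faulhaber_coeff_def)

lemma faulhaber_coeff_even:
  assumes "j < n div 2"
  shows "faulhaber_coeff n (2 * j + 2)
    = (of_int (2 * int j - int n) gchoose (2 * j + 1)) * riemann_zeta (- 2 * of_nat j - 1)"
proof -
  have jn: "2 * j + 1 \<le> n"
    using assms by linarith
  have "(of_int (2 * int j - int n) gchoose (2 * j + 1) :: complex)
      = (-1) ^ (2 * j + 1) * ((of_nat (2 * j + 1) - of_int (2 * int j - int n) - 1) gchoose (2 * j + 1))"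
    by (rule gbinomial_negated_upper)
  also have "\<dots> = - of_nat (n choose (2 * j + 1))"
    by (simp add: binomial_gbinomial)
  finally have "(of_int (2 * int j - int n) gchoose (2 * j + 1) :: complex) = - of_nat (n choose (2 * j + 1))" .
  moreover have "riemann_zeta (- 2 * of_nat j - 1) = - bernoulli_plus (2 * j + 2) / of_nat (2 * j + 2)"
  proof -
    have "(- 2 * of_nat j - 1 :: complex) = 1 - of_nat (2 * j + 2)"
      by simp
    then show ?thesis
      by (simp only: riemann_zeta_1_minus_nat zero_less_Suc add_2_eq_Suc')
  qed
  ultimately have "(of_int (2 * int j - int n) gchoose (2 * j + 1)) * riemann_zeta (- 2 * of_nat j - 1)
      = of_nat (n choose (2 * j + 1)) * bernoulli_plus (2 * j + 2) / of_nat (2 * j + 2)"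
    by simp
  also have "\<dots> = faulhaber_coeff n (2 * j + 2)"
    using jn by (simp add: faulhaber_coeff_def binomial_fact Suc_diff_le field_simps del: of_nat_Suc)
  finally show ?thesis ..
qed

lemma faulhaber_coeff_nonzeroE:
  assumes "faulhaber_coeff n k \<noteq> 0" "k \<le> n" "2 \<le> k"
  obtains j where "j < n div 2" "k = 2 * j + 2"
proof (cases "even k")
  case True
  then obtain l where "k = 2 * l"
    by (auto elim: evenE)
  with assms show ?thesis
    using that[of "l - 1"] by auto
next
  case False
  then obtain l where l: "k = 2 * l + 1"
    by (auto elim: oddE)
  with assms have "bernoulli_plus k = 0"
    using bernoulli_plus_odd[of l] by auto
  with assms show ?thesis
    by (simp add: faulhaber_coeff_eq_0_iff)
qed

lemma riemann_zeta_shift_tendsto: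
  "((\<lambda>w. riemann_zeta (w + c) * (w - p)) \<longlongrightarrow> (if p + c = 1 then 1 else 0)) (at p)"
proof (cases "p + c = 1")
  case True
  have "isCont zeta_reg (p + c)"
    using holomorphic_zeta_reg holomorphic_on_imp_continuous_on continuous_on_eq_continuous_at by blast
  then have "((\<lambda>w. zeta_reg (w + c)) \<longlongrightarrow> zeta_reg 1) (at p)"
    using True by (intro isCont_tendsto_compose[where g = zeta_reg] tendsto_eq_intros) auto
  moreover have "\<forall>\<^sub>F w in at p. zeta_reg (w + c) = riemann_zeta (w + c) * (w - p)"
  proof (rule eventually_at_filter[THEN iffD2, OF always_eventually], intro allI impI)
    fix w assume "w \<noteq> p"
    have c: "c = 1 - p"
      using True by (simp add: algebra_simps)
    with \<open>w \<noteq> p\<close> have "w + c \<noteq> 1"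
      by auto
    then show "zeta_reg (w + c) = riemann_zeta (w + c) * (w - p)"
      using \<open>w \<noteq> p\<close> by (simp add: riemann_zeta_eq_zeta_reg c)
  qed
  ultimately show ?thesis
    using True by (simp add: zeta_reg_1 tendsto_cong)
next
  case False
  have "isCont riemann_zeta (p + c)"
    using False holomorphic_on_imp_continuous_on[OF holomorphic_riemann_zeta]
    by (subst (asm) continuous_on_eq_continuous_at) (auto simp: open_Diff)
  then have "((\<lambda>w. riemann_zeta (w + c) * (w - p)) \<longlongrightarrow> riemann_zeta (p + c) * (p - p)) (at p)"
    by (intro isCont_tendsto_compose[where g = riemann_zeta] tendsto_intros)
  then show ?thesis
    using False by simp
qed

text \<open>The term \<open>k\<close> of \<open>double_zeta n\<close> has its only pole at \<open>s = 2 - k\<close>, and \<open>- riemann_zeta s\<close>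
  contributes a pole at \<open>s = 1\<close>.\<close>
lemma double_zeta_residue_tendsto:
  "((\<lambda>w. double_zeta n w * (w - (2 - of_nat K))) \<longlongrightarrow>
     (if K \<le> n then faulhaber_coeff n K else 0) - (if K = 1 then 1 else 0)) (at (2 - of_nat K))"
proof -
  let ?p = "2 - of_nat K :: complex"
  have "((\<lambda>w. (\<Sum>k\<le>n. faulhaber_coeff n k * (riemann_zeta (w + (of_nat k - 1)) * (w - ?p)))
        - riemann_zeta (w + 0) * (w - ?p))
      \<longlongrightarrow> (\<Sum>k\<le>n. faulhaber_coeff n k * (if ?p + (of_nat k - 1) = 1 then 1 else 0))
        - (if ?p + 0 = 1 then 1 else 0)) (at ?p)"
    by (intro tendsto_intros riemann_zeta_shift_tendsto)
  moreover have "?p + (of_nat k - 1) = 1 \<longleftrightarrow> k = K" for k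
    by (simp add: algebra_simps)
  moreover have "?p + 0 = 1 \<longleftrightarrow> K = 1"
    using of_nat_eq_iff[of K 1, where 'a = complex] by (auto simp: algebra_simps)
  moreover have "double_zeta n w * (w - ?p)
      = (\<Sum>k\<le>n. faulhaber_coeff n k * (riemann_zeta (w + (of_nat k - 1)) * (w - ?p)))
        - riemann_zeta (w + 0) * (w - ?p)" for w
    by (simp add: double_zeta_def left_diff_distrib sum_distrib_right add_diff_eq mult.assoc)
  ultimately show ?thesis
    by (simp add: if_distrib[of "(*) _"] sum.delta' cong: if_cong)
qed

definition double_zeta_poles :: "nat \<Rightarrow> complex set" where
  "double_zeta_poles n = {2, 1} \<union> {- 2 * of_nat k | k. k < n div 2}"

lemma finite_double_zeta_poles: "finite (double_zeta_poles n)"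
proof -
  have "{- 2 * of_nat k | k. k < n div 2} = (\<lambda>k. - 2 * of_nat k :: complex) ` {..<n div 2}"
    by auto
  then show ?thesis
    by (simp add: double_zeta_poles_def)
qed

lemma two_minus_mem_double_zeta_poles:
  assumes "k \<le> n" "faulhaber_coeff n k \<noteq> 0"
  shows "2 - of_nat k \<in> double_zeta_poles n"
proof (cases "2 \<le> k")
  case True
  then obtain j where "j < n div 2" "k = 2 * j + 2"
    using faulhaber_coeff_nonzeroE assms by blast
  then have "(2 - of_nat k :: complex) = - 2 * of_nat j" "j < n div 2"
    by simp_all
  then show ?thesis
    unfolding double_zeta_poles_def by blast
next
  case False
  then have "k = 0 \<or> k = 1"
    by auto
  then show ?thesis
    unfolding double_zeta_poles_def by auto
qed

lemma holomorphic_double_zeta: "double_zeta n holomorphic_on (UNIV - double_zeta_poles n)"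
proof -
  have "(\<lambda>s. faulhaber_coeff n k * riemann_zeta (s + of_nat k - 1)) holomorphic_on (UNIV - double_zeta_poles n)"
    if "k \<le> n" for k
  proof (cases "faulhaber_coeff n k = 0")
    case True
    then show ?thesis
      by (simp add: holomorphic_on_const)
  next
    case False
    have "(\<lambda>s. riemann_zeta (s + of_nat k - 1)) holomorphic_on (UNIV - double_zeta_poles n)"
    proof (rule holomorphic_on_compose_gen[OF _ holomorphic_riemann_zeta, unfolded o_def])
      show "(\<lambda>s. s + of_nat k - 1) holomorphic_on (UNIV - double_zeta_poles n)"
        by (intro holomorphic_intros)
      have "s + of_nat k - 1 \<noteq> 1" if "s \<notin> double_zeta_poles n" for s
      proof
        assume "s + of_nat k - 1 = 1"
        then have "s = 2 - of_nat k"
          by (simp add: algebra_simps)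
        with that two_minus_mem_double_zeta_poles[OF \<open>k \<le> n\<close> False] show False
          by simp
      qed
      then show "(\<lambda>s. s + of_nat k - 1) ` (UNIV - double_zeta_poles n) \<subseteq> UNIV - {1}"
        by auto
    qed
    then show ?thesis
      by (intro holomorphic_intros)
  qed
  moreover have "riemann_zeta holomorphic_on (UNIV - double_zeta_poles n)"
    by (rule holomorphic_on_subset[OF holomorphic_riemann_zeta]) (auto simp: double_zeta_poles_def)
  ultimately show ?thesis
    unfolding double_zeta_def[abs_def] by (intro holomorphic_on_diff holomorphic_on_sum) auto
qed

lemma double_zeta_pole:
  assumes "c = (if K \<le> n then faulhaber_coeff n K else 0) - (if K = 1 then 1 else 0)" "c \<noteq> 0"
  shows "is_pole (double_zeta n) (2 - of_nat K) \<and> residue (double_zeta n) (2 - of_nat K) = c"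
proof -
  have lim: "((\<lambda>w. double_zeta n w * (w - (2 - of_nat K))) \<longlongrightarrow> c) (at (2 - of_nat K))"
    unfolding assms(1) by (rule double_zeta_residue_tendsto)
  show ?thesis
    using is_pole_of_tendsto_mult[OF lim assms(2)]
      residue_of_tendsto_mult[OF holomorphic_double_zeta finite_double_zeta_poles lim] by simp
qed

lemma double_zeta_pole_2: "is_pole (double_zeta n) 2 \<and> residue (double_zeta n) 2 = 1 / (of_nat n + 1)"
proof -
  have "(of_nat n + 1 :: complex) \<noteq> 0"
    by (metis of_nat_Suc of_nat_neq_0 add.commute)
  then show ?thesis
    using double_zeta_pole[of "1 / (of_nat n + 1)" 0 n] by (simp add: faulhaber_coeff_0)
qed

lemma double_zeta_pole_1:
  "is_pole (double_zeta n) 1 \<and>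
     residue (double_zeta n) 1 = (if n = 0 then 2 * riemann_zeta 0 else riemann_zeta 0)"
proof (cases "n = 0")
  case True
  then show ?thesis
    using double_zeta_pole[of "- 1" 1 n] by (simp add: riemann_zeta_0)
next
  case False
  then have "is_pole (double_zeta n) (2 - of_nat 1) \<and> residue (double_zeta n) (2 - of_nat 1) = - 1 / 2"
    by (intro double_zeta_pole) (simp_all add: faulhaber_coeff_1)
  with False show ?thesis
    by (simp add: riemann_zeta_0)
qed

lemma double_zeta_pole_neg_even:
  assumes "j < n div 2"
  shows "is_pole (double_zeta n) (- 2 * of_nat j) \<and> residue (double_zeta n) (- 2 * of_nat j)
     = (of_int (2 * int j - int n) gchoose (2 * j + 1)) * riemann_zeta (- 2 * of_nat j - 1)"
proof -
  have "2 * j + 2 \<le> n"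
    using assms by linarith
  moreover have "faulhaber_coeff n (2 * j + 2) \<noteq> 0"
    using bernoulli_plus_even_nonzero[of "j + 1"] by (simp add: faulhaber_coeff_eq_0_iff)
  moreover have "(2 - of_nat (2 * j + 2) :: complex) = - 2 * of_nat j"
    by simp
  ultimately show ?thesis
    using double_zeta_pole[of _ "2 * j + 2" n] faulhaber_coeff_even[OF assms] by simp
qed

theorem theorem4p1:
  shows
  "(\<exists>f. f holomorphic_on (UNIV - {2, 1}) \<and>
        (\<forall>s. 2 < Re s \<longrightarrow> f s = dz_series 0 s) \<and>
        is_pole f 2 \<and> residue f 2 = 1 \<and>
        is_pole f 1 \<and> residue f 1 = 2 * riemann_zeta 0)
 \<and> (\<exists>f. f holomorphic_on (UNIV - {2, 1}) \<and>
        (\<forall>s. 2 < Re s \<longrightarrow> f s = dz_series 1 s) \<and>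
        is_pole f 2 \<and> residue f 2 = 1 / 2 \<and>
        is_pole f 1 \<and> residue f 1 = riemann_zeta 0)
 \<and> (\<forall>n::nat. 2 \<le> n \<longrightarrow>
      (\<exists>f. f holomorphic_on
              (UNIV - ({2, 1} \<union> {- 2 * of_nat k | k. k < n div 2})) \<and>
        (\<forall>s. 2 < Re s \<longrightarrow> f s = dz_series n s) \<and>
        is_pole f 2 \<and> residue f 2 = 1 / (of_nat n + 1) \<and>
        is_pole f 1 \<and> residue f 1 = riemann_zeta 0 \<and> riemann_zeta 0 = - 1 / 2 \<and>
        (\<forall>k::nat. k < n div 2 \<longrightarrow>
           is_pole f (- 2 * of_nat k) \<and>
           residue f (- 2 * of_nat k) =
             (of_int (2 * int k - int n) gchoose (2 * k + 1)) *
             riemann_zeta (- 2 * of_nat k - 1))))"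
proof -
  have hol: "double_zeta n holomorphic_on (UNIV - ({2, 1} \<union> {- 2 * of_nat k | k. k < n div 2}))" for n
    using holomorphic_double_zeta by (simp add: double_zeta_poles_def)
  note poles = double_zeta_pole_2 double_zeta_pole_1 double_zeta_pole_neg_even
  show ?thesis
    apply (intro conjI allI impI)
    subgoal
      using hol[of 0] poles by (intro exI[of _ "double_zeta 0"]) (simp add: double_zeta_eq_dz_series)
    subgoal
      using hol[of 1] poles by (intro exI[of _ "double_zeta 1"]) (simp add: double_zeta_eq_dz_series)
    subgoal for n
      using hol[of n] poles
      by (intro exI[of _ "double_zeta n"]) (simp add: double_zeta_eq_dz_series riemann_zeta_0)
    done
qed

end
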